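(* For any $n\in\mathbb N^*$, any weight vector $\varpi$ for $\Gamma_n$ and any $\gamma\in\mathbb F^*$, the graph $\gamma\Gamma_n^\varpi$ has the Kahan-Poisson property.
   Context: $\mathbb F\in\{\mathbb R,\mathbb C\}$. A skew-symmetric graph is $\Gamma=(S,A)$, $S=\{1,\dots,n\}$, $A=(a_{i,j})$ skew-symmetric over $\mathbb F$. Its Poisson bracket on $\mathbb F(x)$ is $\{x_i,x_j\}=a_{i,j}x_ix_j$; its Kahan morphism (step size 1) is $K(x_i)=\tilde x_i$ with $\tilde x_i$ the unique solution of $\tilde x_i-x_i=\tilde x_i\sum_ja_{i,j}x_j+x_i\sum_ja_{i,j}\tilde x_j$; $\Gamma$ has the Kahan-Poisson property if $\{\tilde x_i,\tilde x_j\}=a_{i,j}\tilde x_i\tilde x_j$ for all $i,j$. $\Gamma_n$ has $a_{i,j}=1$ for $i<j$; $\gamma\Gamma=(S,\gamma A)$. A weight vector is $\varpi:S\to\mathbb N^*$ and the cloning $\Gamma^\varpi$ has vertices $(i,k)$, $1\le k\le\varpi(i)$, with $a^\varpi_{(i,k),(j,\ell)}=a_{i,j}$. *)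

theory Defs
  imports "HOL-Analysis.Analysis"
begin

text \<open>A skew-symmetric graph is a pair (S, A) of a finite vertex set S and a
  matrix A indexed by S. Points of F^S are functions vanishing outside S.\<close>

type_synonym ('v, 'a) sgraph = "'v set \<times> ('v \<Rightarrow> 'v \<Rightarrow> 'a)"

definition skew_graph :: "('v, 'a::ring_1) sgraph \<Rightarrow> bool" where
  "skew_graph G \<longleftrightarrow> finite (fst G) \<and>
     (\<forall>i\<in>fst G. \<forall>j\<in>fst G. snd G i j = - snd G j i)"

definition pts :: "'v set \<Rightarrow> ('v \<Rightarrow> 'a::zero) set" where
  "pts S = {x. \<forall>v. v \<notin> S \<longrightarrow> x v = 0}"

text \<open>The Kahan equations (step size 1): y is the image of x.\<close>
definition kahan_eq :: "('v, 'a::comm_ring_1) sgraph \<Rightarrow> ('v \<Rightarrow> 'a) \<Rightarrow> ('v \<Rightarrow> 'a) \<Rightarrow> bool" where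
  "kahan_eq G x y \<longleftrightarrow> (\<forall>i\<in>fst G.
     y i - x i = y i * (\<Sum>j\<in>fst G. snd G i j * x j) + x i * (\<Sum>j\<in>fst G. snd G i j * y j))"

text \<open>Points where the Kahan system has a unique solution (the domain of the
  rational Kahan map, i.e. where its common denominator does not vanish).\<close>
definition kahan_dom :: "('v, 'a::comm_ring_1) sgraph \<Rightarrow> ('v \<Rightarrow> 'a) set" where
  "kahan_dom G = {x \<in> pts (fst G). \<exists>!y. y \<in> pts (fst G) \<and> kahan_eq G x y}"

definition kahan :: "('v, 'a::comm_ring_1) sgraph \<Rightarrow> ('v \<Rightarrow> 'a) \<Rightarrow> ('v \<Rightarrow> 'a)" where
  "kahan G x = (THE y. y \<in> pts (fst G) \<and> kahan_eq G x y)"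

definition partial_deriv :: "(('v \<Rightarrow> 'a::real_normed_field) \<Rightarrow> 'a) \<Rightarrow> 'v \<Rightarrow> ('v \<Rightarrow> 'a) \<Rightarrow> 'a" where
  "partial_deriv f k x = deriv (\<lambda>t. f (x(k := t))) (x k)"

text \<open>Poisson bracket of the log-canonical structure {x_k,x_l} = a_kl x_k x_l.\<close>
definition poisson :: "('v, 'a::real_normed_field) sgraph \<Rightarrow> (('v \<Rightarrow> 'a) \<Rightarrow> 'a) \<Rightarrow> (('v \<Rightarrow> 'a) \<Rightarrow> 'a) \<Rightarrow> ('v \<Rightarrow> 'a) \<Rightarrow> 'a" where
  "poisson G f g x = (\<Sum>k\<in>fst G. \<Sum>l\<in>fst G.
      snd G k l * x k * x l * partial_deriv f k x * partial_deriv g l x)"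

definition kahan_poisson :: "('v, 'a::real_normed_field) sgraph \<Rightarrow> bool" where
  "kahan_poisson G \<longleftrightarrow> (\<forall>x\<in>kahan_dom G. \<forall>i\<in>fst G. \<forall>j\<in>fst G.
      poisson G (\<lambda>z. kahan G z i) (\<lambda>z. kahan G z j) x = snd G i j * kahan G x i * kahan G x j)"

definition Gamma_graph :: "nat \<Rightarrow> (nat, 'a::ring_1) sgraph" where
  "Gamma_graph n = ({1..n}, \<lambda>i j. if i < j then 1 else if j < i then -1 else 0)"

definition scale_graph :: "'a::ring_1 \<Rightarrow> ('v, 'a) sgraph \<Rightarrow> ('v, 'a) sgraph" where
  "scale_graph c G = (fst G, \<lambda>i j. c * snd G i j)"

definition weight_vector :: "('v, 'a) sgraph \<Rightarrow> ('v \<Rightarrow> nat) \<Rightarrow> bool" where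
  "weight_vector G w \<longleftrightarrow> (\<forall>i\<in>fst G. w i \<ge> 1)"

definition clone :: "('v, 'a) sgraph \<Rightarrow> ('v \<Rightarrow> nat) \<Rightarrow> ('v \<times> nat, 'a) sgraph" where
  "clone G w = ((SIGMA i:fst G. {1..w i}), \<lambda>p q. snd G (fst p) (fst q))"

end

theory Submission
  imports Defs
begin

text \<open>Summing the Kahan equations over a block shows that they only involve the block sums
  \<open>X i\<close> of \<open>x\<close>, and all vertices of block \<open>i\<close> get multiplied by the same factor. With the
  affine levels \<open>v m = 1 + g (\<Sum>j<m. X j - \<Sum>j\<ge>m. X j)\<close> this factor is
  \<open>v 1 v (n+1) / (v i v (i+1))\<close>, because the block sums of the image obey a two-term recursion
  that telescopes. The map is defined exactly where the inner levels \<open>v 2, \<dots>, v n\<close> and, for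
  blocks of size at least two, the averages \<open>(v i + v (i+1)) / 2\<close> do not vanish: otherwise the
  linear Kahan system has an explicit kernel vector. On the domain the bracket of two components
  is computed from their gradients, which are combinations of unit vectors and the gradients of
  the levels. The brackets of coordinates with levels and of levels with levels are polynomials in
  the levels, so the log-canonical identity becomes a rational identity in at most six levels.\<close>

section \<open>Sums weighted by the ordering sign\<close>

definition cmp_sign :: "nat \<Rightarrow> nat \<Rightarrow> 'a::ring_1" where
  "cmp_sign i j = (if i < j then 1 else if j < i then -1 else 0)"

lemma cmp_sign_swap: "cmp_sign j i = - (cmp_sign i j :: 'a::ring_1)"
  by (auto simp: cmp_sign_def)

definition psum :: "(nat \<Rightarrow> 'a::comm_ring_1) \<Rightarrow> nat \<Rightarrow> 'a" where
  "psum X m = (\<Sum>j\<in>{1..<m}. X j)"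

lemma psum_Suc: "1 \<le> m \<Longrightarrow> psum X (Suc m) = psum X m + X m"
  by (simp add: psum_def sum.atLeastLessThan_Suc)

lemma psum_0 [simp]: "psum X 0 = 0" and psum_1 [simp]: "psum X 1 = 0" "psum X (Suc 0) = 0"
  by (simp_all add: psum_def)

lemma sum_atLeastLessThan_psum:
  assumes "1 \<le> m" "m \<le> l"
  shows "(\<Sum>j\<in>{m..<l}. X j) = psum X l - psum X m"
proof -
  have "sum X {1..<m} + sum X {m..<l} = sum X {1..<l}"
    using assms by (intro sum.atLeastLessThan_concat) auto
  then show ?thesis
    by (simp add: psum_def algebra_simps)
qed

lemma sum_cmp_sign_psum:
  fixes X :: "nat \<Rightarrow> 'a::comm_ring_1"
  assumes "1 \<le> i"
  shows "(\<Sum>j\<in>{1..<m}. cmp_sign i j * X j) =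
    (if m \<le> i then - psum X m else psum X m - psum X (Suc i) - psum X i)"
proof (cases "m \<le> i")
  case True
  then have "(\<Sum>j\<in>{1..<m}. cmp_sign i j * X j) = (\<Sum>j\<in>{1..<m}. - X j)"
    by (intro sum.cong) (auto simp: cmp_sign_def)
  then show ?thesis
    using True by (simp add: psum_def sum_negf)
next
  case False
  have "{1..<m} = {1..<i} \<union> {i} \<union> {Suc i..<m}"
    using assms False by auto
  then have "(\<Sum>j\<in>{1..<m}. cmp_sign i j * X j) =
      (\<Sum>j\<in>{1..<i}. - X j) + (\<Sum>j\<in>{Suc i..<m}. X j)"
    by (simp add: sum.union_disjoint cmp_sign_def)
  also have "(\<Sum>j\<in>{Suc i..<m}. X j) = psum X m - psum X (Suc i)"
    using assms False by (intro sum_atLeastLessThan_psum) auto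
  finally show ?thesis
    using False by (simp add: psum_def sum_negf)
qed

lemma sum_cmp_sign_polar_eq_0:
  fixes X Y :: "nat \<Rightarrow> 'a::comm_ring_1"
  shows "(\<Sum>a\<in>A. \<Sum>b\<in>A. cmp_sign a b * (Y a * X b + X a * Y b)) = 0"
proof -
  have "(\<Sum>a\<in>A. \<Sum>b\<in>A. cmp_sign a b * X a * Y b) = (\<Sum>b\<in>A. \<Sum>a\<in>A. cmp_sign a b * X a * Y b)"
    by (rule sum.swap)
  also have "\<dots> = (\<Sum>b\<in>A. \<Sum>a\<in>A. - (cmp_sign b a * Y b * X a))"
    by (intro sum.cong refl) (auto simp: cmp_sign_def)
  finally show ?thesis
    by (simp add: sum.distrib sum_negf algebra_simps)
qed

lemma sum_cmp_sign_square_eq_0: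
  fixes X :: "nat \<Rightarrow> 'a::field_char_0"
  shows "(\<Sum>a\<in>A. \<Sum>b\<in>A. cmp_sign a b * X a * X b) = 0"
proof -
  have "2 * (\<Sum>a\<in>A. \<Sum>b\<in>A. cmp_sign a b * X a * X b) = 0"
    using sum_cmp_sign_polar_eq_0[of X X A] by (simp add: sum_distrib_left algebra_simps)
  then show ?thesis
    by simp
qed

lemma atLeastAtMost_Int_less:
  "m \<le> Suc n \<Longrightarrow> {Suc 0..n} \<inter> {a. a < m} = {Suc 0..<m}"
  by auto

definition prefix_form :: "(nat \<Rightarrow> 'a::comm_ring_1) \<Rightarrow> nat \<Rightarrow> nat \<Rightarrow> 'a" where
  "prefix_form X m l = (\<Sum>a\<in>{1..<m}. \<Sum>b\<in>{1..<l}. cmp_sign a b * X a * X b)"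

lemma sum_of_bool_less_prefix_form:
  assumes "m \<le> Suc n" "l \<le> Suc n"
  shows "(\<Sum>a\<in>{1..n}. \<Sum>b\<in>{1..n}. of_bool (a < m) * (of_bool (b < l) * (cmp_sign a b * X a * X b))) =
    prefix_form X m l"
proof -
  have "(\<Sum>a\<in>{1..n}. \<Sum>b\<in>{1..n}. of_bool (a < m) * (of_bool (b < l) * (cmp_sign a b * X a * X b))) =
      (\<Sum>a\<in>{1..n}. of_bool (a < m) * (\<Sum>b\<in>{1..n}. of_bool (b < l) * (cmp_sign a b * X a * X b)))"
    by (simp only: sum_distrib_left)
  then show ?thesis
    using assms by (simp add: prefix_form_def atLeastAtMost_Int_less)
qed

lemma prefix_form_le:
  fixes X :: "nat \<Rightarrow> 'a::field_char_0"
  assumes "1 \<le> m" "m \<le> l"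
  shows "prefix_form X m l = psum X m * (psum X l - psum X m)"
proof -
  have "prefix_form X m l = (\<Sum>a\<in>{1..<m}.
      (\<Sum>b\<in>{1..<m}. cmp_sign a b * X a * X b) + (\<Sum>b\<in>{m..<l}. cmp_sign a b * X a * X b))"
    unfolding prefix_form_def using assms
    by (intro sum.cong refl sum.atLeastLessThan_concat[symmetric]) auto
  also have "\<dots> = (\<Sum>a\<in>{1..<m}. \<Sum>b\<in>{1..<m}. cmp_sign a b * X a * X b)
      + (\<Sum>a\<in>{1..<m}. X a) * (\<Sum>b\<in>{m..<l}. X b)"
    by (simp add: sum.distrib sum_product cmp_sign_def)
  also have "(\<Sum>a\<in>{1..<m}. \<Sum>b\<in>{1..<m}. cmp_sign a b * X a * X b) = 0"
    by (rule sum_cmp_sign_square_eq_0)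
  also have "(\<Sum>b\<in>{m..<l}. X b) = psum X l - psum X m"
    using assms by (rule sum_atLeastLessThan_psum)
  finally show ?thesis
    by (simp add: psum_def)
qed

lemma prefix_form_swap: "prefix_form X m l = - prefix_form X l m"
proof -
  have "prefix_form X m l = (\<Sum>b\<in>{1..<l}. \<Sum>a\<in>{1..<m}. cmp_sign a b * X a * X b)"
    unfolding prefix_form_def by (rule sum.swap)
  also have "\<dots> = (\<Sum>b\<in>{1..<l}. \<Sum>a\<in>{1..<m}. - (cmp_sign b a * X b * X a))"
    by (intro sum.cong refl) (auto simp: cmp_sign_def)
  also have "\<dots> = - prefix_form X l m"
    by (simp add: prefix_form_def sum_negf)
  finally show ?thesis .
qed

section \<open>Affine quotients\<close>

lemma has_field_derivative_affine_quotient: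
  fixes A a B b t0 :: "'a::real_normed_field"
  assumes "B \<noteq> 0"
  shows "((\<lambda>t. (A + a * (t - t0)) / (B + b * (t - t0))) has_field_derivative (a - A / B * b) / B) (at t0)"
proof -
  have "((\<lambda>t. (A + a * (t - t0)) / (B + b * (t - t0))) has_field_derivative
      (a * (B + b * (t0 - t0)) - (A + a * (t0 - t0)) * b) / ((B + b * (t0 - t0)) * (B + b * (t0 - t0)))) (at t0)"
    using assms by (auto intro!: derivative_eq_intros)
  then show ?thesis
    using assms by (simp add: field_simps)
qed

lemma eventually_affine_nonzero:
  fixes A a t0 :: "'a::real_normed_field"
  assumes "A \<noteq> 0"
  shows "eventually (\<lambda>t. A + a * (t - t0) \<noteq> 0) (nhds t0)"
proof -
  have "((\<lambda>t. A + a * (t - t0)) \<longlongrightarrow> A + a * (t0 - t0)) (nhds t0)"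
    by (intro tendsto_intros filterlim_ident)
  then show ?thesis
    using assms by (intro tendsto_imp_eventually_ne) auto
qed

section \<open>The block sums of a cloned \<open>\<gamma>\<Gamma>\<^sub>n\<close>\<close>

locale cloned_gamma =
  fixes n :: nat and w :: "nat \<Rightarrow> nat" and g :: "'a::real_normed_field"
  assumes g_nonzero: "g \<noteq> 0" and n_pos: "1 \<le> n" and w_pos: "\<And>i. i \<in> {1..n} \<Longrightarrow> 1 \<le> w i"
begin

abbreviation S :: "(nat \<times> nat) set" where
  "S \<equiv> SIGMA i:{1..n}. {1..w i}"

abbreviation \<Gamma> :: "(nat \<times> nat, 'a) sgraph" where
  "\<Gamma> \<equiv> scale_graph g (clone (Gamma_graph n) w)"

lemma fst_\<Gamma>: "fst \<Gamma> = S"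
  by (simp add: scale_graph_def clone_def Gamma_graph_def)

lemma snd_\<Gamma>: "snd \<Gamma> p q = g * cmp_sign (fst p) (fst q)"
  by (simp add: scale_graph_def clone_def Gamma_graph_def cmp_sign_def)

definition block_sum :: "(nat \<times> nat \<Rightarrow> 'a) \<Rightarrow> nat \<Rightarrow> 'a" where
  "block_sum x i = (\<Sum>k\<in>{1..w i}. x (i, k))"

definition skew_sum :: "(nat \<Rightarrow> 'a) \<Rightarrow> nat \<Rightarrow> 'a" where
  "skew_sum X i = (\<Sum>j\<in>{1..n}. cmp_sign i j * X j)"

definition level :: "(nat \<Rightarrow> 'a) \<Rightarrow> nat \<Rightarrow> 'a" where
  "level X m = 1 - g * psum X (Suc n) + 2 * g * psum X m"

definition mid_level :: "(nat \<Rightarrow> 'a) \<Rightarrow> nat \<Rightarrow> 'a" where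
  "mid_level X i = 1 - g * skew_sum X i"

lemma sum_S: "(\<Sum>q\<in>S. f q) = (\<Sum>j\<in>{1..n}. \<Sum>k\<in>{1..w j}. f (j, k))"
  by (subst sum.Sigma) auto

lemma sum_S_block_sum: "(\<Sum>q\<in>S. h (fst q) * y q) = (\<Sum>j\<in>{1..n}. h j * block_sum y j)"
  unfolding sum_S block_sum_def by (simp add: sum_distrib_left)

lemma psum_top: "psum X (Suc n) = sum X {1..n}"
  unfolding psum_def by (intro sum.cong) auto

lemma skew_sum_psum:
  "i \<in> {1..n} \<Longrightarrow> skew_sum X i = psum X (Suc n) - psum X (Suc i) - psum X i"
  unfolding skew_sum_def psum_top[symmetric] using sum_cmp_sign_psum[of i X "Suc n"]
  by (simp add: psum_def atLeastLessThanSuc_atLeastAtMost)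

lemma skew_sum_cong: "(\<And>j. j \<in> {1..n} \<Longrightarrow> X j = Y j) \<Longrightarrow> skew_sum X i = skew_sum Y i"
  unfolding skew_sum_def by (intro sum.cong) auto

lemma level_Suc: "1 \<le> m \<Longrightarrow> level X (Suc m) = level X m + 2 * g * X m"
  by (simp add: level_def psum_Suc algebra_simps)

lemma level_1: "level X 1 = 1 - g * psum X (Suc n)" "level X (Suc 0) = 1 - g * psum X (Suc n)"
  by (simp_all add: level_def)

lemma level_top: "level X (Suc n) = 1 + g * psum X (Suc n)"
  by (simp add: level_def)

lemma mid_level_eq: "i \<in> {1..n} \<Longrightarrow> 2 * mid_level X i = level X i + level X (Suc i)"
  by (simp add: mid_level_def skew_sum_psum level_def algebra_simps)

lemma kahan_eq_iff:
  "kahan_eq \<Gamma> x y \<longleftrightarrow> (\<forall>p\<in>S.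
     y p - x p = y p * (g * skew_sum (block_sum x) (fst p)) + x p * (g * skew_sum (block_sum y) (fst p)))"
proof -
  have "(\<Sum>q\<in>S. g * cmp_sign i (fst q) * z q) = g * skew_sum (block_sum z) i" for i z
    using sum_S_block_sum[of "\<lambda>j. g * cmp_sign i j" z]
    by (simp add: skew_sum_def sum_distrib_left mult.assoc)
  then show ?thesis
    unfolding kahan_eq_def fst_\<Gamma> snd_\<Gamma> by simp
qed

section \<open>The explicit Kahan map\<close>

text \<open>The factors are written so that they stay meaningful when \<open>level X 1\<close> or \<open>level X (n+1)\<close>
  vanishes: only the inner levels \<open>2..n\<close> are ever divided by.\<close>

definition left_ratio :: "(nat \<Rightarrow> 'a) \<Rightarrow> nat \<Rightarrow> 'a" where
  "left_ratio X i = (if i = 1 then 1 else level X 1 / level X i)"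

definition right_ratio :: "(nat \<Rightarrow> 'a) \<Rightarrow> nat \<Rightarrow> 'a" where
  "right_ratio X i = (if i = n then 1 else level X (Suc n) / level X (Suc i))"

definition kahan_factor :: "(nat \<Rightarrow> 'a) \<Rightarrow> nat \<Rightarrow> 'a" where
  "kahan_factor X i = left_ratio X i * right_ratio X i"

definition co_level :: "(nat \<Rightarrow> 'a) \<Rightarrow> nat \<Rightarrow> 'a" where
  "co_level X m = (if m = 1 then level X (Suc n) else if m = Suc n then level X 1
     else level X 1 * level X (Suc n) / level X m)"

definition inner_levels_nonzero :: "(nat \<Rightarrow> 'a) \<Rightarrow> bool" where
  "inner_levels_nonzero X \<longleftrightarrow> (\<forall>m\<in>{2..n}. level X m \<noteq> 0)"

lemma kahan_factor_level:
  assumes "inner_levels_nonzero X" "i \<in> {1..n}"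
  shows "kahan_factor X i * level X i = co_level X (Suc i)"
    and "kahan_factor X i * level X (Suc i) = co_level X i"
proof -
  have "level X i \<noteq> 0" if "i \<noteq> 1"
    using assms that by (auto simp: inner_levels_nonzero_def)
  moreover have "level X (Suc i) \<noteq> 0" if "i \<noteq> n"
    using assms that by (auto simp: inner_levels_nonzero_def)
  ultimately show "kahan_factor X i * level X i = co_level X (Suc i)"
    and "kahan_factor X i * level X (Suc i) = co_level X i"
    using assms(2) by (auto simp: kahan_factor_def left_ratio_def right_ratio_def co_level_def)
qed

lemma co_level_diff:
  assumes "inner_levels_nonzero X" "m \<in> {1..n}"
  shows "co_level X m - co_level X (Suc m) = 2 * g * X m * kahan_factor X m"
  using kahan_factor_level[OF assms] level_Suc[of m X] assms(2)
  by (auto simp: algebra_simps)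

lemma co_level_mult_level:
  assumes "inner_levels_nonzero X" "m \<in> {1..Suc n}"
  shows "co_level X m * level X m = level X 1 * level X (Suc n)"
  using assms by (auto simp: co_level_def inner_levels_nonzero_def)

text \<open>The block sums of the image are \<open>Y j = X j * kahan_factor X j\<close>; their prefix sums
  telescope through \<open>co_level\<close>.\<close>

lemma psum_kahan_factor:
  assumes "inner_levels_nonzero X" "m \<in> {1..Suc n}"
  shows "2 * g * psum (\<lambda>j. X j * kahan_factor X j) m = 1 + g * psum X (Suc n) - co_level X m"
  using assms(2)
proof (induction m)
  case 0
  then show ?case by simp
next
  case (Suc m)
  show ?case
  proof (cases "m = 0")
    case True
    then show ?thesis by (simp add: co_level_def level_top)
  next
    case False
    then have m: "m \<in> {1..n}"
      using Suc.prems by auto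
    then show ?thesis
      using Suc.IH co_level_diff[OF assms(1) m] by (simp add: psum_Suc algebra_simps)
  qed
qed

lemma psum_top_kahan_factor:
  assumes "inner_levels_nonzero X"
  shows "psum (\<lambda>j. X j * kahan_factor X j) (Suc n) = psum X (Suc n)"
proof -
  have "2 * g * psum (\<lambda>j. X j * kahan_factor X j) (Suc n) = 2 * g * psum X (Suc n)"
    using psum_kahan_factor[OF assms, of "Suc n"] n_pos by (simp add: co_level_def level_1)
  then show ?thesis
    using g_nonzero by simp
qed

lemma kahan_factor_mid_level:
  assumes "inner_levels_nonzero X" "i \<in> {1..n}"
  shows "kahan_factor X i * mid_level X i = 1 + g * skew_sum (\<lambda>j. X j * kahan_factor X j) i"
proof -
  let ?Y = "\<lambda>j. X j * kahan_factor X j"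
  have "2 * (1 + g * skew_sum ?Y i) = 2 + 2 * g * psum X (Suc n) - 2 * g * psum ?Y (Suc i) - 2 * g * psum ?Y i"
    using assms psum_top_kahan_factor[OF assms(1)] by (simp add: skew_sum_psum algebra_simps)
  also have "\<dots> = co_level X i + co_level X (Suc i)"
  proof -
    have Y: "2 * g * psum ?Y i = 1 + g * psum X (Suc n) - co_level X i"
      "2 * g * psum ?Y (Suc i) = 1 + g * psum X (Suc n) - co_level X (Suc i)"
      using assms(2) by (auto intro: psum_kahan_factor[OF assms(1)])
    show ?thesis
      unfolding Y by (simp add: algebra_simps)
  qed
  also have "\<dots> = kahan_factor X i * (2 * mid_level X i)"
    unfolding mid_level_eq[OF assms(2)] distrib_left kahan_factor_level[OF assms] by simp
  finally have "2 * (1 + g * skew_sum ?Y i) = 2 * (kahan_factor X i * mid_level X i)"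
    by (simp only: ac_simps)
  then show ?thesis
    by (metis mult_left_cancel zero_neq_numeral)
qed

definition kahan_sol :: "(nat \<times> nat \<Rightarrow> 'a) \<Rightarrow> nat \<times> nat \<Rightarrow> 'a" where
  "kahan_sol x p = (if p \<in> S then x p * kahan_factor (block_sum x) (fst p) else 0)"

definition regular :: "(nat \<times> nat \<Rightarrow> 'a) \<Rightarrow> bool" where
  "regular x \<longleftrightarrow> inner_levels_nonzero (block_sum x) \<and>
     (\<forall>i\<in>{1..n}. 2 \<le> w i \<longrightarrow> mid_level (block_sum x) i \<noteq> 0)"

lemma kahan_sol_pts: "kahan_sol x \<in> pts S"
  by (simp add: pts_def kahan_sol_def)

lemma block_sum_kahan_sol:
  "j \<in> {1..n} \<Longrightarrow> block_sum (kahan_sol x) j = block_sum x j * kahan_factor (block_sum x) j"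
  by (simp add: block_sum_def kahan_sol_def sum_distrib_right)

lemma kahan_eq_kahan_sol:
  assumes "inner_levels_nonzero (block_sum x)"
  shows "kahan_eq \<Gamma> x (kahan_sol x)"
  unfolding kahan_eq_iff
proof
  fix p assume p: "p \<in> S"
  define X where "X = block_sum x"
  define i where "i = fst p"
  have i: "i \<in> {1..n}"
    using p by (auto simp: i_def)
  have "skew_sum (block_sum (kahan_sol x)) i = skew_sum (\<lambda>j. X j * kahan_factor X j) i"
    by (intro skew_sum_cong) (simp add: block_sum_kahan_sol X_def)
  then have "kahan_factor X i * (1 - g * skew_sum X i) = 1 + g * skew_sum (block_sum (kahan_sol x)) i"
    using kahan_factor_mid_level[OF assms i] by (simp add: mid_level_def X_def)
  moreover have "kahan_sol x p = x p * kahan_factor X i"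
    using p by (simp add: kahan_sol_def X_def i_def)
  ultimately show "kahan_sol x p - x p = kahan_sol x p * (g * skew_sum (block_sum x) (fst p))
      + x p * (g * skew_sum (block_sum (kahan_sol x)) (fst p))"
    unfolding X_def i_def by algebra
qed

lemma kahan_eq_block_sum:
  assumes "kahan_eq \<Gamma> x y" "i \<in> {1..n}"
  shows "block_sum y i - block_sum x i =
    block_sum y i * (g * skew_sum (block_sum x) i) + block_sum x i * (g * skew_sum (block_sum y) i)"
proof -
  have "block_sum y i - block_sum x i = (\<Sum>k\<in>{1..w i}. y (i, k) - x (i, k))"
    by (simp add: block_sum_def sum_subtractf)
  also have "\<dots> = (\<Sum>k\<in>{1..w i}.
      y (i, k) * (g * skew_sum (block_sum x) i) + x (i, k) * (g * skew_sum (block_sum y) i))"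
    using assms by (intro sum.cong refl) (auto simp: kahan_eq_iff)
  finally show ?thesis
    by (simp add: block_sum_def sum.distrib sum_distrib_right)
qed

definition block_kahan_eq :: "(nat \<Rightarrow> 'a) \<Rightarrow> (nat \<Rightarrow> 'a) \<Rightarrow> bool" where
  "block_kahan_eq X Y \<longleftrightarrow>
     (\<forall>i\<in>{1..n}. Y i - X i = Y i * (g * skew_sum X i) + X i * (g * skew_sum Y i))"

lemma block_kahan_eq_psum_top:
  assumes "block_kahan_eq X Y"
  shows "psum Y (Suc n) = psum X (Suc n)"
proof -
  have "psum Y (Suc n) - psum X (Suc n) = (\<Sum>i\<in>{1..n}. Y i - X i)"
    by (simp add: psum_top sum_subtractf)
  also have "\<dots> = (\<Sum>i\<in>{1..n}. Y i * (g * skew_sum X i) + X i * (g * skew_sum Y i))"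
    using assms by (intro sum.cong refl) (simp add: block_kahan_eq_def)
  also have "\<dots> = g * (\<Sum>i\<in>{1..n}. \<Sum>j\<in>{1..n}. cmp_sign i j * (Y i * X j + X i * Y j))"
    by (simp add: skew_sum_def sum_distrib_left sum.distrib algebra_simps)
  also have "\<dots> = 0"
    by (simp add: sum_cmp_sign_polar_eq_0)
  finally show ?thesis
    by simp
qed

text \<open>Uniqueness: \<open>1 + g psum X (n+1) - 2 g psum Y m\<close> satisfies the recursion defining
  \<open>co_level X m\<close>, which pins down the block sums \<open>Y\<close> one after the other.\<close>

lemma block_kahan_eq_recursion:
  assumes "block_kahan_eq X Y" "i \<in> {1..n}"
  shows "Y i * level X (Suc i) = X i * (1 + g * psum X (Suc n) - 2 * g * psum Y i)"
proof -
  have "Y i - X i = Y i * (g * skew_sum X i) + X i * (g * skew_sum Y i)"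
    using assms by (simp add: block_kahan_eq_def)
  then show ?thesis
    using assms(2) block_kahan_eq_psum_top[OF assms(1)]
    by (simp add: level_def psum_Suc skew_sum_psum algebra_simps)
qed

lemma block_kahan_eq_unique:
  assumes nz: "inner_levels_nonzero X" and eq: "block_kahan_eq X Y" and m: "m \<in> {1..n}"
  shows "Y m = X m * kahan_factor X m"
proof -
  define u where "u m = 1 + g * psum X (Suc n) - 2 * g * psum Y m" for m
  have rec: "Y i * level X (Suc i) = X i * u i" if "i \<in> {1..n}" for i
    using block_kahan_eq_recursion[OF eq that] by (simp add: u_def)
  have u_co_level: "u m = co_level X m" if "m \<in> {1..Suc n}" for m
    using that
  proof (induction m)
    case 0
    then show ?case by simp
  next
    case (Suc m)
    consider "m = 0" | "m = n" | "m \<in> {1..n}" "Suc m \<in> {2..n}"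
      using Suc.prems by force
    then show ?case
    proof cases
      case 1
      then show ?thesis by (simp add: u_def co_level_def level_top)
    next
      case 2
      then show ?thesis
        using block_kahan_eq_psum_top[OF eq] n_pos by (simp add: u_def co_level_def level_1)
    next
      case 3
      have "u (Suc m) * level X (Suc m) = u m * level X (Suc m) - 2 * g * (Y m * level X (Suc m))"
        using 3 by (simp add: u_def psum_Suc algebra_simps)
      also have "\<dots> = co_level X m * level X m"
        using Suc.IH 3 rec[of m] level_Suc[of m X] by (simp add: algebra_simps)
      also have "\<dots> = level X 1 * level X (Suc n)"
        using 3 by (intro co_level_mult_level nz) auto
      finally show ?thesis
        using 3 nz by (auto simp: co_level_def inner_levels_nonzero_def field_simps)
    qed
  qed
  have "2 * g * Y m = u m - u (Suc m)"
    using m by (simp add: u_def psum_Suc algebra_simps)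
  also have "\<dots> = 2 * g * (X m * kahan_factor X m)"
    using m u_co_level co_level_diff[OF nz m] by (simp add: algebra_simps)
  finally show ?thesis
    using g_nonzero by simp
qed

lemma kahan_eq_unique:
  assumes "regular x" "y \<in> pts S" "kahan_eq \<Gamma> x y"
  shows "y = kahan_sol x"
proof
  fix p
  define X where "X = block_sum x"
  have nz: "inner_levels_nonzero X"
    using assms(1) by (simp add: regular_def X_def)
  have Y: "block_sum y j = X j * kahan_factor X j" if "j \<in> {1..n}" for j
    using block_kahan_eq_unique[OF nz _ that] kahan_eq_block_sum[OF assms(3)]
    by (simp add: block_kahan_eq_def X_def)
  show "y p = kahan_sol x p"
  proof (cases "p \<in> S")
    case False
    then show ?thesis
      using assms(2) by (cases p) (auto simp: pts_def kahan_sol_def)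
  next
    case True
    then obtain i k where p: "p = (i, k)" "i \<in> {1..n}" "k \<in> {1..w i}"
      by auto
    have "y p * mid_level X i = x p * (1 + g * skew_sum (block_sum y) i)"
      using assms(3) True p by (simp add: kahan_eq_iff mid_level_def X_def algebra_simps)
    also have "skew_sum (block_sum y) i = skew_sum (\<lambda>j. X j * kahan_factor X j) i"
      by (intro skew_sum_cong) (simp add: Y)
    also have "1 + g * \<dots> = kahan_factor X i * mid_level X i"
      using kahan_factor_mid_level[OF nz p(2)] by simp
    finally have y_mid: "y p * mid_level X i = x p * kahan_factor X i * mid_level X i"
      by simp
    show ?thesis
    proof (cases "mid_level X i = 0")
      case False
      then show ?thesis
        using y_mid True p by (simp add: kahan_sol_def X_def)
    next
      case True
      then have "w i = 1"
        using assms(1) p w_pos[of i] by (force simp: regular_def X_def)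
      then show ?thesis
        using Y[OF p(2)] p by (simp add: block_sum_def kahan_sol_def X_def)
    qed
  qed
qed

lemma kahan_regular:
  assumes "regular x"
  shows "kahan \<Gamma> x = kahan_sol x"
  unfolding kahan_def fst_\<Gamma>
proof (rule the_equality)
  show "kahan_sol x \<in> pts S \<and> kahan_eq \<Gamma> x (kahan_sol x)"
    using kahan_sol_pts kahan_eq_kahan_sol assms unfolding regular_def by blast
qed (use kahan_eq_unique assms in blast)

section \<open>The domain of the Kahan map\<close>

definition kahan_kernel :: "(nat \<times> nat \<Rightarrow> 'a) \<Rightarrow> (nat \<times> nat \<Rightarrow> 'a) \<Rightarrow> bool" where
  "kahan_kernel x z \<longleftrightarrow>
     (\<forall>p\<in>S. z p * mid_level (block_sum x) (fst p) = x p * (g * skew_sum (block_sum z) (fst p)))"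

definition block_kernel :: "(nat \<Rightarrow> 'a) \<Rightarrow> (nat \<Rightarrow> 'a) \<Rightarrow> bool" where
  "block_kernel X Z \<longleftrightarrow> (\<forall>i\<in>{1..n}. Z i * mid_level X i = X i * (g * skew_sum Z i))"

lemma kahan_kernel_trivial:
  assumes x: "x \<in> kahan_dom \<Gamma>" and z: "z \<in> pts S" "kahan_kernel x z" and p: "p \<in> S"
  shows "z p = 0"
proof -
  obtain y where y: "y \<in> pts S" "kahan_eq \<Gamma> x y"
    and uniq: "\<And>y'. y' \<in> pts S \<Longrightarrow> kahan_eq \<Gamma> x y' \<Longrightarrow> y' = y"
    using x by (auto simp: kahan_dom_def fst_\<Gamma>)
  have skew: "skew_sum (block_sum (\<lambda>q. y q + z q)) i =
      skew_sum (block_sum y) i + skew_sum (block_sum z) i" for i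
    by (simp add: skew_sum_def block_sum_def sum.distrib algebra_simps)
  have "kahan_eq \<Gamma> x (\<lambda>q. y q + z q)"
    unfolding kahan_eq_iff
  proof
    fix q assume "q \<in> S"
    then have "y q - x q = y q * (g * skew_sum (block_sum x) (fst q)) + x q * (g * skew_sum (block_sum y) (fst q))"
      and "z q * (1 - g * skew_sum (block_sum x) (fst q)) = x q * (g * skew_sum (block_sum z) (fst q))"
      using y(2) z(2) by (auto simp: kahan_eq_iff kahan_kernel_def mid_level_def)
    then show "y q + z q - x q = (y q + z q) * (g * skew_sum (block_sum x) (fst q))
        + x q * (g * skew_sum (block_sum (\<lambda>q. y q + z q)) (fst q))"
      unfolding skew by algebra
  qed
  moreover have "(\<lambda>q. y q + z q) \<in> pts S"
    using y(1) z(1) by (simp add: pts_def)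
  ultimately have "(\<lambda>q. y q + z q) = y"
    by (rule uniq[rotated])
  then show ?thesis
    by (metis add_cancel_left_right)
qed

lemma mid_level_nonzero_if_kahan_dom:
  assumes x: "x \<in> kahan_dom \<Gamma>" and i: "i \<in> {1..n}" and "2 \<le> w i"
  shows "mid_level (block_sum x) i \<noteq> 0"
proof
  assume mid: "mid_level (block_sum x) i = 0"
  define z where "z p = (if p = (i, 1) then 1 else if p = (i, 2) then -1 else 0 :: 'a)" for p :: "nat \<times> nat"
  have S12: "(i, 1) \<in> S" "(i, 2) \<in> S"
    using i assms(3) by auto
  have "block_sum z j = 0" for j
  proof -
    have "block_sum z j = (\<Sum>k\<in>{1..w j}. (if j = i \<and> k = 1 then 1 else 0) - (if j = i \<and> k = 2 then 1 else 0))"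
      unfolding block_sum_def z_def by (intro sum.cong refl) auto
    then show ?thesis
      using assms(3) by (cases "j = i") (simp_all add: sum_subtractf)
  qed
  then have "kahan_kernel x z"
    using mid by (auto simp: kahan_kernel_def skew_sum_def z_def)
  moreover have "z \<in> pts S"
    using S12 by (auto simp: pts_def z_def)
  ultimately have "z (i, 1) = 0"
    using kahan_kernel_trivial[OF x] S12 by blast
  then show False
    by (simp add: z_def)
qed

lemma block_kernel_defect:
  assumes "i \<in> {1..n}" "psum Z (Suc n) = 0"
  shows "Z i * mid_level X i - X i * (g * skew_sum Z i) = Z i * level X (Suc i) + 2 * g * X i * psum Z i"
  using assms by (simp add: mid_level_def skew_sum_psum level_def psum_Suc algebra_simps)

text \<open>A vanishing inner level \<open>level X m\<close> produces the explicit kernel vector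
  \<open>e (m-1) - e m\<close>: its prefix sums are the indicator of \<open>m\<close>, and
  \<open>level X (m+1) = level X m + 2 g X m = 2 g X m\<close>.\<close>

lemma block_kernel_if_level_zero:
  assumes m: "m \<in> {2..n}" and "level X m = 0"
  defines "Z \<equiv> \<lambda>i. if i = m - 1 then 1 else if i = m then -1 else 0 :: 'a"
  shows "block_kernel X Z"
proof -
  have psum_Z: "psum Z i = (if i = m then 1 else 0)" if "1 \<le> i" for i
    using that
  proof (induction i rule: dec_induct)
    case (step i)
    then show ?case
      using m by (auto simp: psum_Suc Z_def)
  qed (use m in \<open>simp add: Z_def\<close>)
  have "psum Z (Suc n) = 0"
    using m by (simp add: psum_Z)
  moreover have "Z i * level X (Suc i) + 2 * g * X i * psum Z i = 0" if i: "i \<in> {1..n}" for i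
  proof -
    have "psum Z i = (if i = m then 1 else 0)"
      using i psum_Z by simp
    then show ?thesis
      using i m assms(2) level_Suc[of m X] by (auto simp: Z_def)
  qed
  ultimately show ?thesis
    unfolding block_kernel_def using block_kernel_defect by (metis right_minus_eq)
qed

lemma kahan_kernel_lift:
  assumes Z: "block_kernel (block_sum x) Z"
    and mid: "\<forall>i\<in>{1..n}. 2 \<le> w i \<longrightarrow> mid_level (block_sum x) i \<noteq> 0"
  obtains z where "z \<in> pts S" "kahan_kernel x z" "\<And>i. i \<in> {1..n} \<Longrightarrow> block_sum z i = Z i"
proof -
  define X where "X = block_sum x"
  define z where "z p = (if p \<notin> S then 0 else if 2 \<le> w (fst p)
      then x p * (g * skew_sum Z (fst p)) / mid_level X (fst p) else Z (fst p))" for p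
  have block_z: "block_sum z i = Z i" if i: "i \<in> {1..n}" for i
  proof (cases "2 \<le> w i")
    case True
    then have nz: "mid_level X i \<noteq> 0"
      using mid i by (simp add: X_def)
    have "block_sum z i = (\<Sum>k\<in>{1..w i}. x (i, k) * (g * skew_sum Z i / mid_level X i))"
      using i True by (simp add: block_sum_def z_def)
    also have "\<dots> = X i * (g * skew_sum Z i) / mid_level X i"
      by (simp add: X_def block_sum_def sum_distrib_right sum_divide_distrib)
    also have "X i * (g * skew_sum Z i) = Z i * mid_level X i"
      using Z i by (simp add: block_kernel_def X_def)
    also have "\<dots> / mid_level X i = Z i"
      using nz by simp
    finally show ?thesis .
  next
    case False
    then have "w i = 1"
      using w_pos[OF i] by simp
    then show ?thesis
      using i by (simp add: block_sum_def z_def)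
  qed
  have "kahan_kernel x z"
    unfolding kahan_kernel_def
  proof
    fix p assume p: "p \<in> S"
    then obtain i k where p: "p = (i, k)" "i \<in> {1..n}" "k \<in> {1..w i}"
      by auto
    have skew: "skew_sum (block_sum z) i = skew_sum Z i"
      by (intro skew_sum_cong) (simp add: block_z)
    show "z p * mid_level (block_sum x) (fst p) = x p * (g * skew_sum (block_sum z) (fst p))"
    proof (cases "2 \<le> w i")
      case True
      then show ?thesis
        using p mid skew by (simp add: z_def X_def)
    next
      case False
      then have "w i = 1" "k = 1"
        using w_pos[OF p(2)] p(3) by auto
      then show ?thesis
        using Z p skew by (simp add: z_def block_kernel_def block_sum_def)
    qed
  qed
  moreover have "z \<in> pts S"
    by (simp add: pts_def z_def)
  ultimately show ?thesis
    using that block_z by blast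
qed

lemma regular_if_kahan_dom:
  assumes x: "x \<in> kahan_dom \<Gamma>"
  shows "regular x"
proof -
  have mid: "\<forall>i\<in>{1..n}. 2 \<le> w i \<longrightarrow> mid_level (block_sum x) i \<noteq> 0"
    using mid_level_nonzero_if_kahan_dom[OF x] by blast
  have "level (block_sum x) m \<noteq> 0" if m: "m \<in> {2..n}" for m
  proof
    assume "level (block_sum x) m = 0"
    from kahan_kernel_lift[OF block_kernel_if_level_zero[OF m this] mid]
    obtain z where z: "z \<in> pts S" "kahan_kernel x z"
      and block_z: "\<And>i. i \<in> {1..n} \<Longrightarrow> block_sum z i = (if i = m - 1 then 1 else if i = m then -1 else 0)"
      by blast
    have "m - 1 \<in> {1..n}"
      using m by auto
    then have "block_sum z (m - 1) = 1"
      using block_z by simp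
    have "z p = 0" if "p \<in> S" for p
      using kahan_kernel_trivial[OF x z that] .
    then have "block_sum z (m - 1) = 0"
      unfolding block_sum_def using \<open>m - 1 \<in> {1..n}\<close> by (intro sum.neutral) auto
    then show False
      using \<open>block_sum z (m - 1) = 1\<close> by simp
  qed
  then show ?thesis
    using mid by (simp add: regular_def inner_levels_nonzero_def)
qed

section \<open>Partial derivatives of the Kahan map\<close>

definition level_grad :: "nat \<Rightarrow> nat \<times> nat \<Rightarrow> 'a" where
  "level_grad m k = g * (2 * of_bool (fst k < m) - 1)"

text \<open>The coefficients of \<open>\<nabla>(left_ratio * right_ratio)\<close> with respect to the gradients of the
  levels \<open>1, i, n+1, i+1\<close>; for \<open>i = 1\<close> (\<open>i = n\<close>) the first (last) two terms cancel, since
  then the two gradients coincide.\<close>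

definition grad_terms :: "(nat \<Rightarrow> 'a) \<Rightarrow> nat \<Rightarrow> (nat \<times> 'a) list" where
  "grad_terms X i =
    [(1, right_ratio X i / level X i), (i, - kahan_factor X i / level X i),
     (Suc n, left_ratio X i / level X (Suc i)), (Suc i, - kahan_factor X i / level X (Suc i))]"

definition kahan_grad :: "(nat \<times> nat \<Rightarrow> 'a) \<Rightarrow> nat \<times> nat \<Rightarrow> nat \<times> nat \<Rightarrow> 'a" where
  "kahan_grad x p k = kahan_factor (block_sum x) (fst p) * of_bool (k = p) +
     x p * (\<Sum>(m, c)\<leftarrow>grad_terms (block_sum x) (fst p). c * level_grad m k)"

lemma block_sum_upd:
  assumes "k \<in> S"
  shows "block_sum (x(k := t)) j = block_sum x j + (if j = fst k then t - x k else 0)"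
proof -
  obtain i l where k: "k = (i, l)" "l \<in> {1..w i}"
    using assms by auto
  have "block_sum (x(k := t)) j = (\<Sum>l'\<in>{1..w j}. x (j, l') + (if j = i \<and> l' = l then t - x k else 0))"
    unfolding block_sum_def by (intro sum.cong refl) (auto simp: k)
  also have "\<dots> = block_sum x j + (if j = fst k then t - x k else 0)"
    using k by (auto simp: sum.distrib block_sum_def)
  finally show ?thesis .
qed

lemma level_upd:
  assumes "k \<in> S"
  shows "level (block_sum (x(k := t))) m = level (block_sum x) m + level_grad m k * (t - x k)"
proof -
  have psum: "psum (block_sum (x(k := t))) m = psum (block_sum x) m + (if fst k < m then t - x k else 0)" for m
    using assms by (auto simp: psum_def block_sum_upd sum.distrib)
  have "fst k < Suc n"
    using assms by auto
  then show ?thesis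
    unfolding level_def psum level_grad_def by (simp add: algebra_simps)
qed

lemma eventually_regular_upd:
  assumes k: "k \<in> S" and x: "regular x"
  shows "eventually (\<lambda>t. regular (x(k := t))) (nhds (x k))"
proof -
  have level: "eventually (\<lambda>t. level (block_sum (x(k := t))) m \<noteq> 0) (nhds (x k))"
    if "m \<in> {2..n}" for m
    unfolding level_upd[OF k] using that x
    by (intro eventually_affine_nonzero) (simp add: regular_def inner_levels_nonzero_def)
  have mid: "eventually (\<lambda>t. 2 \<le> w i \<longrightarrow> mid_level (block_sum (x(k := t))) i \<noteq> 0) (nhds (x k))"
    if i: "i \<in> {1..n}" for i
  proof (cases "2 \<le> w i")
    case True
    have eq: "2 * mid_level (block_sum (x(k := t))) i =
        2 * mid_level (block_sum x) i + (level_grad i k + level_grad (Suc i) k) * (t - x k)" for t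
      unfolding mid_level_eq[OF i] level_upd[OF k] by (simp add: algebra_simps)
    have "2 * mid_level (block_sum x) i \<noteq> 0"
      using x i True by (simp add: regular_def)
    from eventually_affine_nonzero[OF this, of "level_grad i k + level_grad (Suc i) k" "x k"]
    show ?thesis
      by eventually_elim (metis eq mult_zero_right)
  qed simp
  have "eventually (\<lambda>t. \<forall>m\<in>{2..n}. level (block_sum (x(k := t))) m \<noteq> 0) (nhds (x k))"
    using level by (simp add: eventually_ball_finite)
  moreover have "eventually (\<lambda>t. \<forall>i\<in>{1..n}. 2 \<le> w i \<longrightarrow> mid_level (block_sum (x(k := t))) i \<noteq> 0) (nhds (x k))"
    using mid by (simp add: eventually_ball_finite)
  ultimately show ?thesis
    by eventually_elim (simp add: regular_def inner_levels_nonzero_def)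
qed

lemma left_ratio_upd_deriv:
  assumes k: "k \<in> S" and x: "regular x" and i: "i \<in> {1..n}"
  shows "((\<lambda>t. left_ratio (block_sum (x(k := t))) i) has_field_derivative
    (level_grad 1 k - left_ratio (block_sum x) i * level_grad i k) / level (block_sum x) i) (at (x k))"
proof (cases "i = 1")
  case False
  then have "level (block_sum x) i \<noteq> 0"
    using x i by (simp add: regular_def inner_levels_nonzero_def)
  from has_field_derivative_affine_quotient[OF this]
  show ?thesis
    using False by (simp add: left_ratio_def level_upd[OF k])
qed (simp add: left_ratio_def)

lemma right_ratio_upd_deriv:
  assumes k: "k \<in> S" and x: "regular x" and i: "i \<in> {1..n}"
  shows "((\<lambda>t. right_ratio (block_sum (x(k := t))) i) has_field_derivative
    (level_grad (Suc n) k - right_ratio (block_sum x) i * level_grad (Suc i) k) / level (block_sum x) (Suc i))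
    (at (x k))"
proof (cases "i = n")
  case False
  then have "level (block_sum x) (Suc i) \<noteq> 0"
    using x i by (simp add: regular_def inner_levels_nonzero_def)
  from has_field_derivative_affine_quotient[OF this]
  show ?thesis
    using False by (simp add: right_ratio_def level_upd[OF k])
qed (simp add: right_ratio_def)

lemma kahan_sol_upd_deriv:
  assumes k: "k \<in> S" and p: "p \<in> S" and x: "regular x"
  shows "((\<lambda>t. kahan_sol (x(k := t)) p) has_field_derivative kahan_grad x p k) (at (x k))"
proof -
  define i where "i = fst p"
  have i: "i \<in> {1..n}"
    using p by (auto simp: i_def)
  have coord: "((\<lambda>t. (x(k := t)) p) has_field_derivative (if k = p then 1 else 0)) (at (x k))"
    by (cases "k = p") (simp_all add: DERIV_ident)
  have "((\<lambda>t. (x(k := t)) p * (left_ratio (block_sum (x(k := t))) i * right_ratio (block_sum (x(k := t))) i))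
      has_field_derivative kahan_grad x p k) (at (x k))"
    by (rule DERIV_cong[OF DERIV_mult[OF coord DERIV_mult[OF left_ratio_upd_deriv[OF k x i]
          right_ratio_upd_deriv[OF k x i]]]])
      (simp add: kahan_grad_def grad_terms_def kahan_factor_def i_def algebra_simps diff_divide_distrib)
  then show ?thesis
    using p by (simp add: kahan_sol_def kahan_factor_def i_def)
qed

lemma partial_deriv_kahan:
  assumes x: "x \<in> kahan_dom \<Gamma>" and k: "k \<in> S" and p: "p \<in> S"
  shows "partial_deriv (\<lambda>z. kahan \<Gamma> z p) k x = kahan_grad x p k"
proof -
  have reg: "regular x"
    using regular_if_kahan_dom[OF x] .
  have "eventually (\<lambda>t. kahan \<Gamma> (x(k := t)) p = kahan_sol (x(k := t)) p) (nhds (x k))"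
    using eventually_regular_upd[OF k reg]
    by eventually_elim (simp add: kahan_regular)
  from DERIV_cong_ev[OF refl this refl] kahan_sol_upd_deriv[OF k p reg]
  have "((\<lambda>t. kahan \<Gamma> (x(k := t)) p) has_field_derivative kahan_grad x p k) (at (x k))"
    by simp
  then show ?thesis
    unfolding partial_deriv_def by (rule DERIV_imp_deriv)
qed

section \<open>The Poisson bracket of two components\<close>

definition bracket_form :: "(nat \<times> nat \<Rightarrow> 'a) \<Rightarrow> (nat \<times> nat \<Rightarrow> 'a) \<Rightarrow> (nat \<times> nat \<Rightarrow> 'a) \<Rightarrow> 'a" where
  "bracket_form x G H = (\<Sum>k\<in>S. \<Sum>l\<in>S. g * cmp_sign (fst k) (fst l) * x k * x l * G k * H l)"

lemma bracket_form_swap: "bracket_form x G H = - bracket_form x H G"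
proof -
  have "bracket_form x G H = (\<Sum>l\<in>S. \<Sum>k\<in>S. g * cmp_sign (fst k) (fst l) * x k * x l * G k * H l)"
    unfolding bracket_form_def by (rule sum.swap)
  also have "\<dots> = (\<Sum>l\<in>S. \<Sum>k\<in>S. - (g * cmp_sign (fst l) (fst k) * x l * x k * H l * G k))"
    by (intro sum.cong refl) (auto simp: cmp_sign_def)
  also have "\<dots> = - bracket_form x H G"
    by (simp add: bracket_form_def sum_negf)
  finally show ?thesis .
qed

lemma bracket_form_linear_left:
  "bracket_form x (\<lambda>k. a * F k + b * G k) H = a * bracket_form x F H + b * bracket_form x G H"
  by (simp add: bracket_form_def sum.distrib sum_distrib_left algebra_simps)

lemma bracket_form_sum_list_left:
  "bracket_form x (\<lambda>k. \<Sum>(m, c)\<leftarrow>ts. c * F m k) H = (\<Sum>(m, c)\<leftarrow>ts. c * bracket_form x (F m) H)"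
proof (induction ts)
  case Nil
  then show ?case by (simp add: bracket_form_def)
next
  case (Cons t ts)
  then show ?case
    using bracket_form_linear_left[of x "snd t" "F (fst t)" 1] by (simp add: case_prod_beta)
qed

lemma bracket_form_linear_right:
  "bracket_form x H (\<lambda>k. a * F k + b * G k) = a * bracket_form x H F + b * bracket_form x H G"
  by (simp add: bracket_form_def sum.distrib sum_distrib_left algebra_simps)

lemma bracket_form_sum_list_right:
  "bracket_form x H (\<lambda>k. \<Sum>(m, c)\<leftarrow>ts. c * F m k) = (\<Sum>(m, c)\<leftarrow>ts. c * bracket_form x H (F m))"
proof (induction ts)
  case Nil
  then show ?case by (simp add: bracket_form_def)
next
  case (Cons t ts)
  then show ?case
    using bracket_form_linear_right[of x H "snd t" "F (fst t)" 1] by (simp add: case_prod_beta)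
qed

lemma bracket_form_unit_left:
  assumes "p \<in> S"
  shows "bracket_form x (\<lambda>k. of_bool (k = p)) (\<lambda>l. \<psi> (fst l)) =
    g * x p * (\<Sum>b\<in>{1..n}. cmp_sign (fst p) b * \<psi> b * block_sum x b)"
proof -
  have "bracket_form x (\<lambda>k. of_bool (k = p)) (\<lambda>l. \<psi> (fst l)) =
      (\<Sum>l\<in>S. (g * x p * cmp_sign (fst p) (fst l) * \<psi> (fst l)) * x l)"
    using assms by (simp add: bracket_form_def of_bool_def if_distrib if_distribR sum.If_cases Int_absorb1 ac_simps)
  also have "\<dots> = g * x p * (\<Sum>b\<in>{1..n}. cmp_sign (fst p) b * \<psi> b * block_sum x b)"
    using sum_S_block_sum[of "\<lambda>b. g * x p * cmp_sign (fst p) b * \<psi> b" x]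
    by (simp add: sum_distrib_left ac_simps)
  finally show ?thesis .
qed

lemma bracket_form_units:
  assumes "p \<in> S" "q \<in> S"
  shows "bracket_form x (\<lambda>k. of_bool (k = p)) (\<lambda>l. of_bool (l = q)) = g * cmp_sign (fst p) (fst q) * x p * x q"
  using assms by (simp add: bracket_form_def of_bool_def if_distrib if_distribR sum.If_cases Int_absorb1)

lemma bracket_form_blocks:
  "bracket_form x (\<lambda>k. \<phi> (fst k)) (\<lambda>l. \<psi> (fst l)) =
    g * (\<Sum>a\<in>{1..n}. \<Sum>b\<in>{1..n}. cmp_sign a b * \<phi> a * \<psi> b * block_sum x a * block_sum x b)"
proof -
  have inner: "(\<Sum>l\<in>S. g * cmp_sign a (fst l) * y * x l * \<phi> a * \<psi> (fst l)) =
      (\<Sum>b\<in>{1..n}. (g * cmp_sign a b * y * \<phi> a * \<psi> b) * block_sum x b)" for a y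
    using sum_S_block_sum[of "\<lambda>b. g * cmp_sign a b * y * \<phi> a * \<psi> b" x] by (simp add: ac_simps)
  have "bracket_form x (\<lambda>k. \<phi> (fst k)) (\<lambda>l. \<psi> (fst l)) =
      (\<Sum>k\<in>S. (\<Sum>b\<in>{1..n}. g * cmp_sign (fst k) b * \<phi> (fst k) * \<psi> b * block_sum x b) * x k)"
    unfolding bracket_form_def inner by (simp add: sum_distrib_left sum_distrib_right ac_simps)
  also have "\<dots> = (\<Sum>a\<in>{1..n}. (\<Sum>b\<in>{1..n}. g * cmp_sign a b * \<phi> a * \<psi> b * block_sum x b) * block_sum x a)"
    by (rule sum_S_block_sum)
  finally show ?thesis
    by (simp add: sum_distrib_left sum_distrib_right ac_simps)
qed

text \<open>The bracket of a coordinate of block \<open>i\<close> with level \<open>m\<close>, divided by the coordinate, and the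
  bracket of the levels \<open>m\<close> and \<open>l\<close>; the total weight enters as
  \<open>g psum X (n+1) = (level X (n+1) - level X 1) / 2\<close>.\<close>

definition xl_bracket :: "(nat \<Rightarrow> 'a) \<Rightarrow> nat \<Rightarrow> nat \<Rightarrow> 'a" where
  "xl_bracket X i m = g / 2 * (if m \<le> i
     then level X i + level X (Suc i) - 2 * level X m + level X 1 - level X (Suc n)
     else 2 * level X m - level X i - level X (Suc i) + level X 1 - level X (Suc n))"

definition ll_bracket :: "(nat \<Rightarrow> 'a) \<Rightarrow> nat \<Rightarrow> nat \<Rightarrow> 'a" where
  "ll_bracket X m l = g / 2 * (level X l - level X m) * (if m \<le> l
     then level X m - level X l + level X (Suc n) - level X 1
     else level X l - level X m + level X (Suc n) - level X 1)"

lemma sum_cmp_sign_signs: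
  assumes "m \<le> Suc n"
  shows "(\<Sum>j\<in>{1..n}. cmp_sign i j * (2 * of_bool (j < m) - 1) * X j) =
    2 * (\<Sum>j\<in>{1..<m}. cmp_sign i j * X j) - skew_sum X i"
proof -
  have "(\<Sum>j\<in>{1..n}. cmp_sign i j * (2 * of_bool (j < m) - 1) * X j) =
      2 * (\<Sum>j\<in>{1..n}. of_bool (j < m) * (cmp_sign i j * X j)) - skew_sum X i"
    by (simp add: skew_sum_def sum_subtractf sum_distrib_left algebra_simps)
  then show ?thesis
    using assms by (simp add: atLeastAtMost_Int_less)
qed

lemma bracket_form_unit_level:
  assumes p: "p \<in> S" and m: "m \<in> {1..Suc n}"
  shows "bracket_form x (\<lambda>k. of_bool (k = p)) (level_grad m) = x p * xl_bracket (block_sum x) (fst p) m"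
proof -
  define X where "X = block_sum x"
  define i where "i = fst p"
  have i: "i \<in> {1..n}"
    using p by (auto simp: i_def)
  have "bracket_form x (\<lambda>k. of_bool (k = p)) (level_grad m) =
      g * x p * g * (\<Sum>j\<in>{1..n}. cmp_sign i j * (2 * of_bool (j < m) - 1) * X j)"
    using bracket_form_unit_left[OF p, of x "\<lambda>b. g * (2 * of_bool (b < m) - 1)"]
    by (simp add: level_grad_def[abs_def] X_def i_def sum_distrib_left ac_simps)
  also have "\<dots> = g * x p * g * (2 * (if m \<le> i then - psum X m else psum X m - psum X (Suc i) - psum X i)
      - (psum X (Suc n) - psum X (Suc i) - psum X i))"
    using m i sum_cmp_sign_signs[of m i X] sum_cmp_sign_psum[of i X m] skew_sum_psum[OF i, of X] by simp
  also have "\<dots> = x p * xl_bracket X i m"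
    by (simp add: xl_bracket_def level_def field_simps)
  finally show ?thesis
    by (simp add: X_def i_def)
qed

lemma bracket_form_level_level:
  assumes m: "m \<in> {1..Suc n}" and l: "l \<in> {1..Suc n}"
  shows "bracket_form x (level_grad m) (level_grad l) = ll_bracket (block_sum x) m l"
proof -
  define X where "X = block_sum x"
  define I where "I m l a b = of_bool (a < m) * (of_bool (b < l) * (cmp_sign a b * X a * X b))" for m l a b
  have Q: "(\<Sum>a\<in>{1..n}. \<Sum>b\<in>{1..n}. I m l a b) = prefix_form X m l" if "m \<le> Suc n" "l \<le> Suc n" for m l
    unfolding I_def using that by (rule sum_of_bool_less_prefix_form)
  have "bracket_form x (level_grad m) (level_grad l) = g * g * g * (\<Sum>a\<in>{1..n}. \<Sum>b\<in>{1..n}.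
      (2 * of_bool (a < m) - 1) * (2 * of_bool (b < l) - 1) * (cmp_sign a b * X a * X b))"
    using bracket_form_blocks[of x "\<lambda>a. g * (2 * of_bool (a < m) - 1)" "\<lambda>b. g * (2 * of_bool (b < l) - 1)"]
    by (simp add: level_grad_def[abs_def] X_def sum_distrib_left ac_simps)
  also have "\<dots> = g * g * g * (\<Sum>a\<in>{1..n}. \<Sum>b\<in>{1..n}.
      4 * I m l a b - 2 * I m (Suc n) a b - 2 * I (Suc n) l a b + I (Suc n) (Suc n) a b)"
    by (intro arg_cong[where f = "\<lambda>s. g * g * g * s"] sum.cong refl) (auto simp: I_def algebra_simps)
  also have "\<dots> = g * g * g * (4 * prefix_form X m l - 2 * prefix_form X m (Suc n) - 2 * prefix_form X (Suc n) l
      + prefix_form X (Suc n) (Suc n))"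
  proof -
    have le: "m \<le> Suc n" "l \<le> Suc n" "Suc n \<le> Suc n"
      using m l by auto
    show ?thesis
      unfolding Q[OF le(1,2), symmetric] Q[OF le(1,3), symmetric] Q[OF le(3,2), symmetric] Q[OF le(3,3), symmetric]
      by (simp only: sum.distrib sum_subtractf sum_distrib_left)
  qed
  also have "\<dots> = ll_bracket X m l"
  proof -
    have top: "prefix_form X m (Suc n) = psum X m * (psum X (Suc n) - psum X m)"
      "prefix_form X (Suc n) l = - (psum X l * (psum X (Suc n) - psum X l))"
      "prefix_form X (Suc n) (Suc n) = 0"
      using m l prefix_form_le[of _ "Suc n" X] prefix_form_swap[of X "Suc n" l] by auto
    have ml: "prefix_form X m l = (if m \<le> l then psum X m * (psum X l - psum X m)
        else - (psum X l * (psum X m - psum X l)))"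
      using m l prefix_form_le[of m l X] prefix_form_le[of l m X] prefix_form_swap[of X m l] by auto
    show ?thesis
      unfolding top ml by (simp add: ll_bracket_def level_def field_simps)
  qed
  finally show ?thesis
    by (simp add: X_def)
qed

definition bracket_defect :: "(nat \<Rightarrow> 'a) \<Rightarrow> nat \<Rightarrow> nat \<Rightarrow> 'a" where
  "bracket_defect X i j =
     kahan_factor X i * (\<Sum>(l, d)\<leftarrow>grad_terms X j. d * xl_bracket X i l)
     - kahan_factor X j * (\<Sum>(m, c)\<leftarrow>grad_terms X i. c * xl_bracket X j m)
     + (\<Sum>(m, c)\<leftarrow>grad_terms X i. \<Sum>(l, d)\<leftarrow>grad_terms X j. c * d * ll_bracket X m l)"

lemma bracket_form_unit_grad_terms:
  assumes p: "p \<in> S" and j: "j \<in> {1..n}"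
  shows "(\<Sum>(l, d)\<leftarrow>grad_terms (block_sum x) j. d * bracket_form x (\<lambda>k. of_bool (k = p)) (level_grad l)) =
    x p * (\<Sum>(l, d)\<leftarrow>grad_terms (block_sum x) j. d * xl_bracket (block_sum x) (fst p) l)"
  using j by (simp add: grad_terms_def bracket_form_unit_level[OF p] algebra_simps)

lemma bracket_form_grad_terms_unit:
  assumes q: "q \<in> S" and i: "i \<in> {1..n}"
  shows "(\<Sum>(m, c)\<leftarrow>grad_terms (block_sum x) i. c * bracket_form x (level_grad m) (\<lambda>k. of_bool (k = q))) =
    - (x q * (\<Sum>(m, c)\<leftarrow>grad_terms (block_sum x) i. c * xl_bracket (block_sum x) (fst q) m))"
proof -
  have "bracket_form x (level_grad m) (\<lambda>k. of_bool (k = q)) = - (x q * xl_bracket (block_sum x) (fst q) m)"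
    if "m \<in> {1..Suc n}" for m
    using bracket_form_swap[of x "level_grad m"] bracket_form_unit_level[OF q that] by simp
  then show ?thesis
    using i by (simp add: grad_terms_def algebra_simps)
qed

lemma bracket_form_grad_terms_grad_terms:
  assumes i: "i \<in> {1..n}" and j: "j \<in> {1..n}"
  shows "(\<Sum>(m, c)\<leftarrow>grad_terms (block_sum x) i. c *
      (\<Sum>(l, d)\<leftarrow>grad_terms (block_sum x) j. d * bracket_form x (level_grad m) (level_grad l))) =
    (\<Sum>(m, c)\<leftarrow>grad_terms (block_sum x) i. \<Sum>(l, d)\<leftarrow>grad_terms (block_sum x) j.
      c * d * ll_bracket (block_sum x) m l)"
  using i j by (simp add: grad_terms_def bracket_form_level_level algebra_simps)

lemma bracket_form_kahan_grad_defect: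
  assumes p: "p \<in> S" and q: "q \<in> S"
  shows "bracket_form x (kahan_grad x p) (kahan_grad x q) =
    g * cmp_sign (fst p) (fst q) * kahan_sol x p * kahan_sol x q
    + x p * x q * bracket_defect (block_sum x) (fst p) (fst q)"
proof -
  define X where "X = block_sum x"
  have i: "fst p \<in> {1..n}" and j: "fst q \<in> {1..n}"
    using p q by auto
  have grad: "kahan_grad x r = (\<lambda>k. kahan_factor X (fst r) * of_bool (k = r)
      + x r * (\<Sum>(m, c)\<leftarrow>grad_terms X (fst r). c * level_grad m k))" for r
    by (simp add: kahan_grad_def X_def fun_eq_iff)
  have "bracket_form x (kahan_grad x p) (kahan_grad x q) =
      kahan_factor X (fst p) * kahan_factor X (fst q) * bracket_form x (\<lambda>k. of_bool (k = p)) (\<lambda>k. of_bool (k = q))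
      + kahan_factor X (fst p) * x q *
        (\<Sum>(l, d)\<leftarrow>grad_terms X (fst q). d * bracket_form x (\<lambda>k. of_bool (k = p)) (level_grad l))
      + x p * kahan_factor X (fst q) *
        (\<Sum>(m, c)\<leftarrow>grad_terms X (fst p). c * bracket_form x (level_grad m) (\<lambda>k. of_bool (k = q)))
      + x p * x q * (\<Sum>(m, c)\<leftarrow>grad_terms X (fst p). c *
        (\<Sum>(l, d)\<leftarrow>grad_terms X (fst q). d * bracket_form x (level_grad m) (level_grad l)))"
    unfolding grad bracket_form_linear_left bracket_form_linear_right
      bracket_form_sum_list_left bracket_form_sum_list_right
    by (simp add: algebra_simps)
  also have "\<dots> = g * cmp_sign (fst p) (fst q) * kahan_sol x p * kahan_sol x q
      + x p * x q * bracket_defect X (fst p) (fst q)"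
    unfolding X_def bracket_form_unit_grad_terms[OF p j] bracket_form_grad_terms_unit[OF q i]
      bracket_form_grad_terms_grad_terms[OF i j]
    using p q by (simp add: bracket_defect_def kahan_sol_def bracket_form_units algebra_simps)
  finally show ?thesis
    by (simp add: X_def)
qed

lemmas bracket_defect_simps = bracket_defect_def grad_terms_def xl_bracket_def ll_bracket_def
  kahan_factor_def left_ratio_def right_ratio_def

lemma bracket_defect_less:
  assumes nz: "inner_levels_nonzero X" and ij: "1 \<le> i" "i < j" "j \<le> n"
  shows "bracket_defect X i j = 0"
proof -
  have level_nz: "level X m \<noteq> 0" if "2 \<le> m" "m \<le> n" for m
    using nz that by (simp add: inner_levels_nonzero_def)
  \<comment> \<open>in each case the levels are renamed to variables, which keeps \<open>field_simps\<close> fast\<close>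
  consider "i = 1" "j = n" | "i = 1" "j < n" | "1 < i" "j = n" | "1 < i" "j < n"
    using ij by linarith
  then show ?thesis
  proof cases
    case 1
    obtain c a' b d where v: "level X (Suc 0) = c" "level X (Suc (Suc 0)) = a'" "level X n = b"
      "level X (Suc n) = d"
      by blast
    have "a' \<noteq> 0" "b \<noteq> 0"
      using 1 ij level_nz[of "Suc (Suc 0)"] level_nz[of n] v by auto
    then show ?thesis
      using 1 ij unfolding 1 by (simp add: bracket_defect_simps v) (simp add: field_simps)
  next
    case 2
    obtain c a' b b' d where v: "level X (Suc 0) = c" "level X (Suc (Suc 0)) = a'" "level X j = b"
      "level X (Suc j) = b'" "level X (Suc n) = d"
      by blast
    have "a' \<noteq> 0" "b \<noteq> 0" "b' \<noteq> 0"
      using 2 ij level_nz[of "Suc (Suc 0)"] level_nz[of j] level_nz[of "Suc j"] v by auto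
    then show ?thesis
      using 2 ij unfolding 2 by (simp add: bracket_defect_simps v) (simp add: field_simps)
  next
    case 3
    obtain c a a' b d where v: "level X 1 = c" "level X i = a" "level X (Suc i) = a'" "level X n = b"
      "level X (Suc n) = d"
      by blast
    have "a \<noteq> 0" "a' \<noteq> 0" "b \<noteq> 0"
      using 3 ij level_nz[of i] level_nz[of "Suc i"] level_nz[of n] v by auto
    then show ?thesis
      using 3 ij unfolding 3 by (simp add: bracket_defect_simps v) (simp add: field_simps)
  next
    case 4
    obtain c a a' b b' d where v: "level X 1 = c" "level X i = a" "level X (Suc i) = a'" "level X j = b"
      "level X (Suc j) = b'" "level X (Suc n) = d"
      by blast
    have "a \<noteq> 0" "a' \<noteq> 0" "b \<noteq> 0" "b' \<noteq> 0"
      using 4 ij level_nz[of i] level_nz[of "Suc i"] level_nz[of j] level_nz[of "Suc j"] v by auto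
    then show ?thesis
      using 4 ij by (simp add: bracket_defect_simps v) (simp add: field_simps)
  qed
qed

lemma bracket_defect_diag:
  assumes nz: "inner_levels_nonzero X" and i: "i \<in> {1..n}"
  shows "bracket_defect X i i = 0"
proof -
  have level_nz: "level X m \<noteq> 0" if "2 \<le> m" "m \<le> n" for m
    using nz that by (simp add: inner_levels_nonzero_def)
  consider "i = 1" "n = 1" | "i = 1" "1 < n" | "1 < i" "i = n" | "1 < i" "i < n"
    using i by fastforce
  then show ?thesis
  proof cases
    case 1
    obtain c d where v: "level X 1 = c" "level X (Suc n) = d"
      by blast
    have "i = n" "n \<le> 1" "(n = 1) = True" "level X n = c"
      using 1 v by auto
    then show ?thesis
      using n_pos unfolding \<open>i = n\<close> by (simp add: bracket_defect_simps v)
  next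
    case 2
    obtain c a' d where v: "level X (Suc 0) = c" "level X (Suc (Suc 0)) = a'" "level X (Suc n) = d"
      by blast
    have "a' \<noteq> 0"
      using 2 level_nz[of "Suc (Suc 0)"] v by auto
    then show ?thesis
      using 2 unfolding 2 by (simp add: bracket_defect_simps v) (simp add: field_simps)
  next
    case 3
    obtain c a d where v: "level X 1 = c" "level X n = a" "level X (Suc n) = d"
      by blast
    have "a \<noteq> 0"
      using 3 level_nz[of n] v by auto
    then show ?thesis
      using 3 unfolding 3 by (simp add: bracket_defect_simps v) (simp add: field_simps)
  next
    case 4
    obtain c a a' d where v: "level X 1 = c" "level X i = a" "level X (Suc i) = a'" "level X (Suc n) = d"
      by blast
    have "a \<noteq> 0" "a' \<noteq> 0"
      using 4 level_nz[of i] level_nz[of "Suc i"] v by auto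
    then show ?thesis
      using 4 by (simp add: bracket_defect_simps v) (simp add: field_simps)
  qed
qed

lemma poisson_kahan:
  assumes x: "x \<in> kahan_dom \<Gamma>" and p: "p \<in> S" and q: "q \<in> S"
  shows "poisson \<Gamma> (\<lambda>z. kahan \<Gamma> z p) (\<lambda>z. kahan \<Gamma> z q) x =
    bracket_form x (kahan_grad x p) (kahan_grad x q)"
  unfolding poisson_def bracket_form_def fst_\<Gamma>
  by (intro sum.cong refl) (simp add: snd_\<Gamma> partial_deriv_kahan[OF x _ p] partial_deriv_kahan[OF x _ q])

lemma bracket_form_kahan_grad:
  assumes x: "x \<in> kahan_dom \<Gamma>" and p: "p \<in> S" and q: "q \<in> S"
  shows "bracket_form x (kahan_grad x p) (kahan_grad x q) =
    g * cmp_sign (fst p) (fst q) * kahan_sol x p * kahan_sol x q"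
proof -
  have nz: "inner_levels_nonzero (block_sum x)"
    using regular_if_kahan_dom[OF x] by (simp add: regular_def)
  have ordered: "bracket_form x (kahan_grad x p) (kahan_grad x q) =
      g * cmp_sign (fst p) (fst q) * kahan_sol x p * kahan_sol x q"
    if p: "p \<in> S" and q: "q \<in> S" and pq: "fst p \<le> fst q" for p q
  proof -
    have "bracket_defect (block_sum x) (fst p) (fst q) = 0"
    proof (cases "fst p = fst q")
      case True
      then show ?thesis
        using bracket_defect_diag[OF nz] p by auto
    next
      case False
      then show ?thesis
        using bracket_defect_less[OF nz] p q pq by auto
    qed
    then show ?thesis
      using bracket_form_kahan_grad_defect[OF p q] by simp
  qed
  show ?thesis
  proof (cases "fst p \<le> fst q")
    case False
    have "bracket_form x (kahan_grad x p) (kahan_grad x q) = - bracket_form x (kahan_grad x q) (kahan_grad x p)"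
      by (rule bracket_form_swap)
    also have "\<dots> = - (g * cmp_sign (fst q) (fst p) * kahan_sol x q * kahan_sol x p)"
      using ordered[OF q p] False by simp
    also have "cmp_sign (fst q) (fst p) = - cmp_sign (fst p) (fst q)"
      by (rule cmp_sign_swap)
    finally show ?thesis
      by (simp add: algebra_simps)
  qed (use ordered[OF p q] in simp)
qed

theorem kahan_poisson_\<Gamma>: "kahan_poisson \<Gamma>"
  unfolding kahan_poisson_def fst_\<Gamma>
proof (intro ballI)
  fix x p q assume x: "x \<in> kahan_dom \<Gamma>" and p: "p \<in> S" and q: "q \<in> S"
  show "poisson \<Gamma> (\<lambda>z. kahan \<Gamma> z p) (\<lambda>z. kahan \<Gamma> z q) x = snd \<Gamma> p q * kahan \<Gamma> x p * kahan \<Gamma> x q"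
    unfolding poisson_kahan[OF x p q] bracket_form_kahan_grad[OF x p q] snd_\<Gamma> kahan_regular[OF regular_if_kahan_dom[OF x]] ..
qed

end

theorem corollary2p4:
  fixes n :: nat and w :: "nat \<Rightarrow> nat" and \<gamma> :: "'a::real_normed_field"
  assumes "n \<ge> 1"
    and "weight_vector (Gamma_graph n :: (nat, 'a) sgraph) w"
    and "\<gamma> \<noteq> 0"
  shows "kahan_poisson (scale_graph \<gamma> (clone (Gamma_graph n) w))"
proof -
  interpret cloned_gamma n w \<gamma>
    using assms by unfold_locales (auto simp: weight_vector_def Gamma_graph_def)
  show ?thesis
    by (rule kahan_poisson_\<Gamma>)
qed

end
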